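(* Let $k\ge1$ and $n\neq0$ be integers and $\mathcal K=J(k,2n)$, whose knot group is $G(\mathcal K)=\langle a,b\mid w^na=bw^n\rangle$ with $w=(ba^{-1})^m(b^{-1}a)^m$ if $k=2m$ and $w=(ba^{-1})^mba(b^{-1}a)^m$ if $k=2m+1$. For a representation $\rho:G(\mathcal K)\to\mathrm{SL}_2(\mathbb C)$ of the form $\rho(a)=\begin{bmatrix} M&1\\0&M^{-1}\end{bmatrix}$, $\rho(b)=\begin{bmatrix} M&0\\2-y&M^{-1}\end{bmatrix}$ (so $y=\operatorname{tr}\rho(ab^{-1})$), put $z=\operatorname{tr}\rho(w)$. Then: (1) If $k=2m$, then $S_{m-1}(y)S_{n-1}(z)\neq0$ for every non-abelian representation $\rho$ of this form. (2) If $k=2m+1\ge3$ (in which case $\mathcal K$ is hyperbolic) and $\rho=\rho_0$ is the holonomy representation of $\mathcal K$, conjugated into this form, then $S_m(y)S_{m-1}(y)\neq0$.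
   Context: $J(k,l)$ denotes the double twist knot/link, the rational knot/link corresponding to the continued fraction $-k+\frac1l$. Every non-abelian representation $G(\mathcal K)\to\mathrm{SL}_2(\mathbb C)$ is conjugate to one of the displayed form with $(M,y)\in(\mathbb C\setminus\{0\})\times\mathbb C$. $S_l(v)$, $l\in\mathbb Z$, are the Chebyshev polynomials of the second kind: $S_0=1$, $S_1=v$, $S_l=vS_{l-1}-S_{l-2}$ for all integers $l$. For a hyperbolic knot, the holonomy representation $\rho_0$ is a lift to $\mathrm{SL}_2(\mathbb C)$ of the discrete faithful representation into $\mathrm{PSL}_2(\mathbb C)$ coming from the complete hyperbolic structure of the knot exterior; it is non-abelian with $\operatorname{tr}\rho_0(a)=\pm2$. *)

theory Defs
  imports "HOL-Analysis.Analysis"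
begin

type_synonym cmat = "complex^2^2"

definition mat2 :: "complex \<Rightarrow> complex \<Rightarrow> complex \<Rightarrow> complex \<Rightarrow> cmat" where
  "mat2 p q r s = vector [vector [p, q], vector [r, s]]"

fun chebS_nat :: "nat \<Rightarrow> complex \<Rightarrow> complex" where
  "chebS_nat 0 v = 1"
| "chebS_nat (Suc 0) v = v"
| "chebS_nat (Suc (Suc j)) v = v * chebS_nat (Suc j) v - chebS_nat j v"

text \<open>S_l for l in Z: S_0 = 1, S_1 = v, S_l = v S_(l-1) - S_(l-2) for all l;
  hence S_(-1) = 0 and S_(-l) = - S_(l-2).\<close>
definition chebS :: "int \<Rightarrow> complex \<Rightarrow> complex" where
  "chebS l v = (if l \<ge> 0 then chebS_nat (nat l) v
                else if l = -1 then 0 else - chebS_nat (nat (- l - 2)) v)"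

text \<open>A letter is (g, e): g = False means a, g = True means b; e = True means inverse.\<close>
type_synonym letter = "bool \<times> bool"
type_synonym word = "letter list"

abbreviation la :: letter where "la \<equiv> (False, False)"
abbreviation lA :: letter where "lA \<equiv> (False, True)"
abbreviation lb :: letter where "lb \<equiv> (True, False)"
abbreviation lB :: letter where "lB \<equiv> (True, True)"

definition inv_letter :: "letter \<Rightarrow> letter" where
  "inv_letter x = (fst x, \<not> snd x)"

definition inv_word :: "word \<Rightarrow> word" where
  "inv_word u = rev (map inv_letter u)"

definition wpow :: "word \<Rightarrow> int \<Rightarrow> word" where
  "wpow u e = (if e \<ge> 0 then concat (replicate (nat e) u)
               else concat (replicate (nat (- e)) (inv_word u)))"

definition wword :: "nat \<Rightarrow> word" where
  "wword k = (let m = k div 2 in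
     if even k then concat (replicate m [lb, lA]) @ concat (replicate m [lB, la])
     else concat (replicate m [lb, lA]) @ [lb, la] @ concat (replicate m [lB, la]))"

definition relator :: "nat \<Rightarrow> int \<Rightarrow> word" where
  "relator k n = wpow (wword k) n @ [la] @ wpow (wword k) (- n) @ [lB]"

text \<open>Equality of words in the finitely presented group G(J(k,2n)):
  the congruence on words generated by free cancellation and the relator.\<close>
inductive geq :: "nat \<Rightarrow> int \<Rightarrow> word \<Rightarrow> word \<Rightarrow> bool" for k n where
  geq_refl: "geq k n u u"
| geq_sym: "geq k n u v \<Longrightarrow> geq k n v u"
| geq_trans: "geq k n u v \<Longrightarrow> geq k n v t \<Longrightarrow> geq k n u t"
| geq_app: "geq k n u u' \<Longrightarrow> geq k n v v' \<Longrightarrow> geq k n (u @ v) (u' @ v')"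
| geq_cancel: "geq k n [x, inv_letter x] []"
| geq_rel: "geq k n (relator k n) []"

definition eval_letter :: "cmat \<Rightarrow> cmat \<Rightarrow> letter \<Rightarrow> cmat" where
  "eval_letter A B x = (let X = (if fst x then B else A) in if snd x then matrix_inv X else X)"

definition weval :: "cmat \<Rightarrow> cmat \<Rightarrow> word \<Rightarrow> cmat" where
  "weval A B u = foldr (\<lambda>x P. eval_letter A B x ** P) u (mat 1)"

definition is_rep :: "nat \<Rightarrow> int \<Rightarrow> cmat \<Rightarrow> cmat \<Rightarrow> bool" where
  "is_rep k n A B \<longleftrightarrow> weval A B (wpow (wword k) n @ [la]) = weval A B ([lb] @ wpow (wword k) n)"

text \<open>The induced map G(J(k,2n)) \<rightarrow> PSL_2(C) is injective.\<close>
definition proj_faithful :: "nat \<Rightarrow> int \<Rightarrow> cmat \<Rightarrow> cmat \<Rightarrow> bool" where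
  "proj_faithful k n A B \<longleftrightarrow>
     (\<forall>u. (weval A B u = mat 1 \<or> weval A B u = - mat 1) \<longrightarrow> geq k n u [])"

text \<open>The image in PSL_2(C) is discrete (the identity is isolated).\<close>
definition proj_discrete :: "cmat \<Rightarrow> cmat \<Rightarrow> bool" where
  "proj_discrete A B \<longleftrightarrow> (\<exists>\<epsilon>>0. \<forall>u.
     (norm (weval A B u - mat 1) < \<epsilon> \<or> norm (weval A B u + mat 1) < \<epsilon>)
       \<longrightarrow> (weval A B u = mat 1 \<or> weval A B u = - mat 1))"

end

theory Submission
  imports Defs "HOL-Computational_Algebra.Fundamental_Theorem_Algebra"
begin

text \<open>
  For \<open>X\<close> in \<open>SL(2,C)\<close> the Cayley-Hamilton theorem gives
  \<open>X^(j+1) = S_j(tr X) X - S_(j-1)(tr X) I\<close>, so \<open>S_j(tr X) = 0\<close> forces \<open>X^(j+1) = \<plusminus>I\<close>.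

  If \<open>k = 2m\<close> and \<open>S_(m-1)(y) = 0\<close>, the two halves \<open>(ba^-1)^m\<close> and \<open>(b^-1a)^m\<close> of \<open>w\<close>,
  whose bases both have trace \<open>y\<close>, are mapped to the same scalar \<open>\<plusminus>I\<close>, so \<open>\<rho>(w) = I\<close>;
  if \<open>S_(n-1)(z) = 0\<close>, then \<open>\<rho>(w)^n = \<plusminus>I\<close>. Either way the relation \<open>w^n a = b w^n\<close>
  gives \<open>\<rho>(a) = \<rho>(b)\<close>, so \<open>\<rho>\<close> is abelian.

  If \<open>k = 2m+1\<close> and \<open>S_m(y) S_(m-1)(y) = 0\<close>, then \<open>\<rho>(ab^-1)\<close> has finite order in
  \<open>PSL(2,C)\<close>, so by faithfulness a power of \<open>ab^-1\<close> is trivial in the knot group. This is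
  refuted by the affine representation \<open>a \<mapsto> (x \<mapsto> tx)\<close>, \<open>b \<mapsto> (x \<mapsto> tx + 1)\<close>, which
  exists for a nonzero root \<open>t\<close> of a polynomial read off from the relation, and which sends
  \<open>ab^-1\<close> to the translation \<open>x \<mapsto> x - 1\<close> of infinite order.
\<close>

lemma mat2_nth [simp]:
  "mat2 a b c d $ 1 $ 1 = a" "mat2 a b c d $ 1 $ 2 = b"
  "mat2 a b c d $ 2 $ 1 = c" "mat2 a b c d $ 2 $ 2 = d"
  by (simp_all add: mat2_def)

lemma mat2_cases: obtains a b c d where "X = mat2 a b c d"
proof
  show "X = mat2 (X$1$1) (X$1$2) (X$2$1) (X$2$2)"
    by (simp add: vec_eq_iff forall_2)
qed

lemma mat2_eq_iff: "mat2 a b c d = mat2 a' b' c' d' \<longleftrightarrow> a = a' \<and> b = b' \<and> c = c' \<and> d = d'"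
  by (metis mat2_nth)

lemma mat2_mult: "mat2 a b c d ** mat2 e f g h = mat2 (a*e+b*g) (a*f+b*h) (c*e+d*g) (c*f+d*h)"
  by (simp add: vec_eq_iff forall_2 matrix_matrix_mult_def sum_2)

lemma mat2_diff: "mat2 a b c d - mat2 a' b' c' d' = mat2 (a - a') (b - b') (c - c') (d - d')"
  by (simp add: vec_eq_iff forall_2)

lemma mat_eq_mat2: "mat x = mat2 x 0 0 x"
  by (simp add: vec_eq_iff forall_2 mat_def)

lemma det_mat2: "det (mat2 a b c d) = a*d - b*c"
  by (simp add: det_2)

lemma trace_mat2: "trace (mat2 a b c d) = a + d"
  by (simp add: trace_def sum_2)

lemma uminus_mat: "- mat c = (mat (- c) :: 'a::ring_1^'n^'n)"
  by (simp add: vec_eq_iff mat_def)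

lemma mat_mult_left: "mat c ** (X :: 'a::semiring_1^'n^'m) = (\<chi> i j. c * X$i$j)"
  unfolding mat_def matrix_matrix_mult_def
  by (simp add: vec_eq_iff if_distrib[of "\<lambda>x. x * _"] sum.delta cong: if_cong)

lemma mat_mult_mat: "mat a ** mat b = (mat (a * b) :: 'a::semiring_1^'n^'n)"
  unfolding mat_mult_left by (simp add: vec_eq_iff mat_def)

lemma mat_mult_commute: "mat c ** X = X ** (mat c :: 'a::comm_semiring_1^'n^'n)"
  unfolding mat_mult_left unfolding mat_def matrix_matrix_mult_def
  by (simp add: vec_eq_iff if_distrib[of "\<lambda>x. _ * x"] sum.delta' mult.commute[of c] cong: if_cong)

lemma det_mat: "det (mat s :: cmat) = s ^ 2"
  by (simp add: mat_eq_mat2 det_mat2 power2_eq_square)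

lemma matrix_inv_eqI:
  fixes A :: "'a::field^'n^'n"
  assumes "A ** X = mat 1"
  shows "matrix_inv A = X"
proof -
  have XA: "X ** A = mat 1"
    using assms matrix_left_right_inverse by blast
  then have "A ** matrix_inv A = mat 1 \<and> matrix_inv A ** A = mat 1"
    unfolding matrix_inv_def using assms by (rule someI[where x = X, OF conjI[rotated]])
  then show ?thesis
    by (metis XA matrix_mul_assoc matrix_mul_lid matrix_mul_rid)
qed

lemma matrix_inv_right:
  fixes A :: "'a::field^'n^'n"
  shows "invertible A \<Longrightarrow> A ** matrix_inv A = mat 1"
  unfolding invertible_def matrix_inv_def by (rule someI_ex[THEN conjunct1])

lemma matrix_inv_left:
  fixes A :: "'a::field^'n^'n"
  shows "invertible A \<Longrightarrow> matrix_inv A ** A = mat 1"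
  using matrix_inv_right matrix_left_right_inverse by blast

lemma invertible_if_det_one: "det (X :: cmat) = 1 \<Longrightarrow> invertible X"
  by (simp add: invertible_det_nz)

lemma mat2_mult_adjugate: "mat2 a b c d ** mat2 d (- b) (- c) a = mat (a*d - b*c)"
  by (simp add: mat2_mult mat_eq_mat2 algebra_simps)

lemma matrix_inv_mat2:
  assumes "a*d - b*c \<noteq> 0"
  shows "matrix_inv (mat2 a b c d) =
    mat2 (d / (a*d - b*c)) (- b / (a*d - b*c)) (- c / (a*d - b*c)) (a / (a*d - b*c))"
    (is "_ = ?X")
proof (rule matrix_inv_eqI)
  let ?s = "1 / (a*d - b*c)"
  have "mat2 a b c d ** ?X = mat2 a b c d ** (mat ?s ** mat2 d (- b) (- c) a)"
    by (simp add: mat_eq_mat2 mat2_mult)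
  also have "\<dots> = mat ?s ** (mat2 a b c d ** mat2 d (- b) (- c) a)"
    by (metis matrix_mul_assoc mat_mult_commute)
  also have "\<dots> = mat 1"
    using assms by (simp add: mat2_mult_adjugate mat_mult_mat)
  finally show "mat2 a b c d ** ?X = mat 1" .
qed

lemma matrix_inv_mat2_det1:
  "a*d - b*c = 1 \<Longrightarrow> matrix_inv (mat2 a b c d) = mat2 d (- b) (- c) a"
  using matrix_inv_mat2[of a d b c] by simp

lemma det_trace_matrix_inv:
  fixes X :: cmat
  assumes "det X = 1"
  shows "det (matrix_inv X) = 1" "trace (matrix_inv X) = trace X"
proof -
  obtain a b c d where X: "X = mat2 a b c d" by (rule mat2_cases)
  have "a*d - b*c = 1" using assms by (simp add: X det_mat2)
  then show "det (matrix_inv X) = 1" "trace (matrix_inv X) = trace X"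
    by (simp_all add: X matrix_inv_mat2_det1 det_mat2 trace_mat2 algebra_simps)
qed

section \<open>Powers in \<open>SL(2,C)\<close> and Chebyshev polynomials\<close>

fun mat_pow :: "cmat \<Rightarrow> nat \<Rightarrow> cmat" where
  "mat_pow X 0 = mat 1"
| "mat_pow X (Suc j) = X ** mat_pow X j"

definition mat_zpow :: "cmat \<Rightarrow> int \<Rightarrow> cmat" where
  "mat_zpow X e = (if e \<ge> 0 then mat_pow X (nat e) else mat_pow (matrix_inv X) (nat (- e)))"

lemma mat_pow_mat: "mat_pow (mat c) j = mat (c ^ j)"
  by (induction j) (simp_all add: mat_mult_mat)

lemma mat_pow_Suc_right: "mat_pow X (Suc j) = mat_pow X j ** X"
  by (induction j) (simp_all add: matrix_mul_assoc)

lemma det_mat_pow: "det X = 1 \<Longrightarrow> det (mat_pow X j) = 1"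
  by (induction j) (simp_all add: det_mul)

lemma mat_pow_mult_right_inverse:
  assumes "A ** B = mat 1"
  shows "mat_pow A j ** mat_pow B j = mat 1"
proof (induction j)
  case (Suc j)
  have "mat_pow A (Suc j) ** mat_pow B (Suc j) = (mat_pow A j ** A) ** (B ** mat_pow B j)"
    by (simp only: mat_pow_Suc_right[of A] mat_pow.simps(2)[of B])
  also have "\<dots> = mat_pow A j ** (A ** B) ** mat_pow B j"
    by (simp add: matrix_mul_assoc)
  finally have "mat_pow A (Suc j) ** mat_pow B (Suc j) = mat_pow A j ** (A ** B) ** mat_pow B j" .
  then show ?case
    using Suc.IH assms by simp
qed simp

lemma matrix_inv_mat_pow:
  assumes "invertible X"
  shows "matrix_inv (mat_pow X j) = mat_pow (matrix_inv X) j"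
  using matrix_inv_eqI mat_pow_mult_right_inverse matrix_inv_right[OF assms] by blast

lemma mat_zpow_mult_uminus:
  assumes "invertible X"
  shows "mat_zpow X e ** mat_zpow X (- e) = mat 1"
  using mat_pow_mult_right_inverse[OF matrix_inv_right[OF assms]]
    mat_pow_mult_right_inverse[OF matrix_inv_left[OF assms]]
  by (simp add: mat_zpow_def)

lemma mat_zpow_mat_one: "mat_zpow (mat 1) e = mat 1"
proof -
  have "matrix_inv (mat 1 :: cmat) = mat 1"
    by (rule matrix_inv_eqI) simp
  then show ?thesis
    using mat_pow_mat[of 1] by (simp add: mat_zpow_def)
qed

lemma mat_pow_affine: "mat_pow (mat2 s c 0 1) j = mat2 (s ^ j) (c * (\<Sum>i<j. s ^ i)) 0 1"
proof (induction j)
  case (Suc j)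
  have "(\<Sum>i<Suc j. s ^ i) = 1 + s * (\<Sum>i<j. s ^ i)"
    unfolding sum.lessThan_Suc_shift by (simp add: sum_distrib_left)
  then show ?case
    using Suc.IH by (simp add: mat2_mult algebra_simps)
qed (simp add: mat_eq_mat2)

lemma chebS_of_nat: "chebS (int j) t = chebS_nat j t"
  by (simp add: chebS_def)

lemma chebS_nat_Suc: "chebS_nat (Suc j) t = t * chebS_nat j t - chebS (int j - 1) t"
  by (cases j) (simp_all add: chebS_def)

lemma mat_pow_Suc_chebS:
  assumes "det X = 1"
  shows "mat_pow X (Suc j) = mat (chebS_nat j (trace X)) ** X - mat (chebS (int j - 1) (trace X))"
proof -
  obtain a b c d where X: "X = mat2 a b c d"
    by (rule mat2_cases)
  have det: "a*d - b*c = 1"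
    using assms by (simp add: X det_mat2)
  show ?thesis
  proof (induction j)
    case 0
    show ?case
      by (simp add: chebS_def)
  next
    case (Suc j)
    let ?S = "chebS_nat j (a + d)" and ?T = "chebS (int j - 1) (a + d)"
    have "mat_pow X (Suc (Suc j)) = mat2 a b c d ** mat2 (?S*a - ?T) (?S*b) (?S*c) (?S*d - ?T)"
      using Suc.IH by (simp add: X trace_mat2 mat_eq_mat2 mat2_mult mat2_diff)
    also have "\<dots> = mat ((a + d) * ?S - ?T) ** mat2 a b c d - mat ?S"
      by (simp add: mat_eq_mat2 mat2_mult mat2_diff mat2_eq_iff) (use det in algebra)
    finally show ?case
      by (simp add: X trace_mat2 chebS_nat_Suc chebS_of_nat)
  qed
qed

lemma mat_pow_Suc_eq_mat_if_chebS_zero: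
  assumes "det X = 1" "chebS_nat j (trace X) = 0"
  shows "mat_pow X (Suc j) = mat (- chebS (int j - 1) (trace X))"
  using mat_pow_Suc_chebS[OF assms(1), of j] assms(2) by (simp add: uminus_mat)

lemma mat_pow_Suc_pm_one_if_chebS_zero:
  assumes "det X = 1" "chebS_nat j (trace X) = 0"
  shows "mat_pow X (Suc j) = mat 1 \<or> mat_pow X (Suc j) = - mat 1"
proof -
  define s where "s = chebS (int j - 1) (trace X)"
  have pow: "mat_pow X (Suc j) = mat (- s)"
    using mat_pow_Suc_eq_mat_if_chebS_zero[OF assms] by (simp add: s_def)
  have "(- s) ^ 2 = 1"
    using det_mat_pow[OF assms(1), of "Suc j"] by (simp only: pow det_mat)
  then have "- s = 1 \<or> - s = - 1"
    by (simp only: power2_eq_1_iff)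
  then show ?thesis
    unfolding pow uminus_mat by auto
qed

lemma mat_zpow_pm_one_if_chebS_zero:
  assumes "det X = 1" "e \<noteq> 0" "chebS (e - 1) (trace X) = 0"
  shows "mat_zpow X e = mat 1 \<or> mat_zpow X e = - mat 1"
proof (cases "e > 0")
  case True
  define j where "j = nat e - 1"
  have e: "e = int (Suc j)"
    using True by (simp add: j_def)
  have "chebS_nat j (trace X) = 0"
    using assms(3) by (simp add: e chebS_of_nat)
  moreover have "mat_zpow X e = mat_pow X (Suc j)"
    by (simp only: mat_zpow_def e nat_int if_True of_nat_0_le_iff)
  ultimately show ?thesis
    using mat_pow_Suc_pm_one_if_chebS_zero[OF assms(1)] by simp
next
  case False
  define j where "j = nat (- e) - 1"
  have e: "e = - int (Suc j)"
    using False assms(2) by (simp add: j_def)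
  have "chebS (e - 1) (trace X) = - chebS_nat j (trace (matrix_inv X))"
    by (simp add: e chebS_def nat_add_distrib det_trace_matrix_inv[OF assms(1)])
  moreover have "mat_zpow X e = mat_pow (matrix_inv X) (Suc j)"
    by (simp only: mat_zpow_def e minus_minus nat_int) simp
  ultimately show ?thesis
    using mat_pow_Suc_pm_one_if_chebS_zero[of "matrix_inv X" j] assms(3) det_trace_matrix_inv[OF assms(1)]
    by simp
qed

lemma weval_Nil [simp]: "weval A B [] = mat 1"
  by (simp add: weval_def)

lemma weval_Cons [simp]: "weval A B (x # u) = eval_letter A B x ** weval A B u"
  by (simp add: weval_def)

lemma weval_append: "weval A B (u @ v) = weval A B u ** weval A B v"
  by (induction u) (simp_all add: matrix_mul_assoc)

lemma weval_concat_replicate: "weval A B (concat (replicate j u)) = mat_pow (weval A B u) j"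
  by (induction j) (simp_all add: weval_append)

lemma eval_letter_mult_inv_letter:
  assumes "invertible A" "invertible B"
  shows "eval_letter A B x ** eval_letter A B (inv_letter x) = mat 1"
  using matrix_inv_right[OF assms(1)] matrix_inv_right[OF assms(2)]
    matrix_inv_left[OF assms(1)] matrix_inv_left[OF assms(2)]
  by (cases x) (auto simp: eval_letter_def inv_letter_def)

lemma invertible_weval:
  assumes "invertible A" "invertible B"
  shows "invertible (weval A B u)"
proof (induction u)
  case Nil
  show ?case
    unfolding invertible_def by (auto intro: exI[of _ "mat 1"])
next
  case (Cons x u)
  have "invertible (matrix_inv X)" if "invertible X" for X :: cmat
    unfolding invertible_def using matrix_inv_left[OF that] matrix_inv_right[OF that] by blast
  then have "invertible (eval_letter A B x)"
    using assms by (simp add: eval_letter_def Let_def)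
  then show ?case
    using Cons.IH by (simp add: invertible_mult)
qed

lemma det_weval:
  assumes "det A = 1" "det B = 1"
  shows "det (weval A B u) = 1"
proof (induction u)
  case (Cons x u)
  have "det (eval_letter A B x) = 1"
    using assms det_trace_matrix_inv by (simp add: eval_letter_def Let_def)
  then show ?case
    using Cons.IH by (simp add: det_mul)
qed simp

lemma weval_inv_word:
  assumes "invertible A" "invertible B"
  shows "weval A B (inv_word u) = matrix_inv (weval A B u)"
proof (rule matrix_inv_eqI[symmetric])
  show "weval A B u ** weval A B (inv_word u) = mat 1"
  proof (induction u)
    case (Cons x u)
    let ?x = "eval_letter A B x" and ?x' = "eval_letter A B (inv_letter x)"
    have "weval A B (x # u) ** weval A B (inv_word (x # u))
        = ?x ** (weval A B u ** weval A B (inv_word u)) ** ?x'"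
      by (simp add: inv_word_def weval_append matrix_mul_assoc)
    then show ?case
      using Cons.IH eval_letter_mult_inv_letter[OF assms] by simp
  qed (simp add: inv_word_def)
qed

lemma weval_wpow:
  assumes "invertible A" "invertible B"
  shows "weval A B (wpow u e) = mat_zpow (weval A B u) e"
  by (simp add: wpow_def mat_zpow_def weval_concat_replicate weval_inv_word[OF assms])

lemma is_rep_iff:
  "is_rep k n A B \<longleftrightarrow> weval A B (wpow (wword k) n) ** A = B ** weval A B (wpow (wword k) n)"
  by (simp add: is_rep_def weval_append eval_letter_def)

lemma weval_eq_if_geq:
  assumes "invertible A" "invertible B" "is_rep k n A B" "geq k n u v"
  shows "weval A B u = weval A B v"
  using assms(4)
proof (induction rule: geq.induct)
  case (geq_app u u' v v')
  then show ?case
    by (simp add: weval_append)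
next
  case (geq_cancel x)
  then show ?case
    using eval_letter_mult_inv_letter[OF assms(1,2)] by simp
next
  case geq_rel
  let ?W = "weval A B (wword k)"
  have inv_W: "invertible ?W"
    using invertible_weval[OF assms(1,2)] .
  have "weval A B (relator k n) = mat_zpow ?W n ** A ** mat_zpow ?W (- n) ** matrix_inv B"
    by (simp add: relator_def weval_append weval_wpow[OF assms(1,2)] eval_letter_def matrix_mul_assoc)
  also have "\<dots> = B ** (mat_zpow ?W n ** mat_zpow ?W (- n)) ** matrix_inv B"
    using assms(3) by (simp add: is_rep_iff weval_wpow[OF assms(1,2)] matrix_mul_assoc)
  also have "\<dots> = mat 1"
    by (simp add: mat_zpow_mult_uminus[OF inv_W] matrix_inv_right[OF assms(2)])
  finally show ?case
    by simp
qed auto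

lemma is_rep_central_imp_eq:
  assumes "is_rep k n A B" "weval A B (wpow (wword k) n) = mat c" "c \<noteq> 0"
  shows "A = B"
proof -
  have "mat c ** A = mat c ** B"
    using assms(1,2) by (simp add: is_rep_iff mat_mult_commute[of c B])
  then have "mat (1 / c) ** (mat c ** A) = mat (1 / c) ** (mat c ** B)"
    by simp
  then show ?thesis
    using assms(3) by (simp add: matrix_mul_assoc mat_mult_mat)
qed

lemma is_rep_pm_one_imp_eq:
  assumes "is_rep k n A B"
    and "weval A B (wpow (wword k) n) = mat 1 \<or> weval A B (wpow (wword k) n) = - mat 1"
  shows "A = B"
  using assms is_rep_central_imp_eq[of k n A B 1] is_rep_central_imp_eq[of k n A B "- 1"]
  by (auto simp: uminus_mat)

section \<open>The even case\<close>

lemma chebS_trace_wword_nonzero: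
  assumes "det A = 1" "det B = 1" "is_rep k n A B" "A \<noteq> B" "n \<noteq> 0"
  shows "chebS (n - 1) (trace (weval A B (wword k))) \<noteq> 0"
proof
  assume "chebS (n - 1) (trace (weval A B (wword k))) = 0"
  then have "mat_zpow (weval A B (wword k)) n = mat 1 \<or> mat_zpow (weval A B (wword k)) n = - mat 1"
    using mat_zpow_pm_one_if_chebS_zero det_weval[OF assms(1,2)] assms(5) by blast
  then have "A = B"
    using is_rep_pm_one_imp_eq[OF assms(3)]
    by (simp add: weval_wpow invertible_if_det_one assms(1,2))
  with assms(4) show False ..
qed

definition rho_a :: "complex \<Rightarrow> cmat" where
  "rho_a M = mat2 M 1 0 (inverse M)"

definition rho_b :: "complex \<Rightarrow> complex \<Rightarrow> cmat" where
  "rho_b M y = mat2 M 0 (2 - y) (inverse M)"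

lemma det_rho:
  assumes "M \<noteq> 0"
  shows "det (rho_a M) = 1" "det (rho_b M y) = 1"
  using assms by (simp_all add: rho_a_def rho_b_def det_mat2)

lemma trace_rho_inverse:
  assumes "M \<noteq> 0"
  shows "trace (rho_a M ** matrix_inv (rho_b M y)) = y"
    and "trace (rho_b M y ** matrix_inv (rho_a M)) = y"
    and "trace (matrix_inv (rho_b M y) ** rho_a M) = y"
proof -
  have "matrix_inv (rho_a M) = mat2 (inverse M) (- 1) 0 M"
    "matrix_inv (rho_b M y) = mat2 (inverse M) 0 (y - 2) M"
    using assms by (simp_all add: rho_a_def rho_b_def matrix_inv_mat2_det1)
  then show "trace (rho_a M ** matrix_inv (rho_b M y)) = y"
    and "trace (rho_b M y ** matrix_inv (rho_a M)) = y"
    and "trace (matrix_inv (rho_b M y) ** rho_a M) = y"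
    using assms by (simp_all add: rho_a_def rho_b_def mat2_mult trace_mat2 algebra_simps)
qed

lemma chebS_pred_nonzero_even:
  assumes "M \<noteq> 0" "is_rep (2 * m) n (rho_a M) (rho_b M y)" "rho_a M \<noteq> rho_b M y"
  shows "chebS (int m - 1) y \<noteq> 0"
proof
  assume S: "chebS (int m - 1) y = 0"
  let ?A = "rho_a M" and ?B = "rho_b M y"
  have inv: "invertible ?A" "invertible ?B"
    using det_rho[OF assms(1)] by (simp_all add: invertible_if_det_one)
  have "weval ?A ?B (wword (2 * m)) = mat 1"
  proof (cases m)
    case (Suc j)
    let ?X = "?B ** matrix_inv ?A" and ?Y = "matrix_inv ?B ** ?A"
    have dets: "det ?X = 1" "det ?Y = 1"
      using det_rho[OF assms(1)] det_trace_matrix_inv by (simp_all add: det_mul)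
    have "chebS_nat j y = 0"
      using S by (simp add: Suc chebS_of_nat)
    then have "mat_pow ?X m = mat_pow ?Y m" "mat_pow ?X m = mat 1 \<or> mat_pow ?X m = - mat 1"
      using mat_pow_Suc_eq_mat_if_chebS_zero[OF dets(1)] mat_pow_Suc_eq_mat_if_chebS_zero[OF dets(2)]
        mat_pow_Suc_pm_one_if_chebS_zero[OF dets(1)] trace_rho_inverse[OF assms(1)]
      by (simp_all only: Suc)
    moreover have "weval ?A ?B (wword (2 * m)) = mat_pow ?X m ** mat_pow ?Y m"
      by (simp add: wword_def weval_append weval_concat_replicate eval_letter_def)
    ultimately show ?thesis
      by (auto simp: uminus_mat mat_mult_mat)
  qed (simp add: wword_def)
  then have "weval ?A ?B (wpow (wword (2 * m)) n) = mat 1"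
    by (simp add: weval_wpow[OF inv] mat_zpow_mat_one)
  then have "?A = ?B"
    using is_rep_pm_one_imp_eq[OF assms(2)] by simp
  with assms(3) show False ..
qed

section \<open>The odd case: an affine representation\<close>

lemma poly_nonzero_root:
  fixes p :: "complex poly"
  assumes "poly p 0 \<noteq> 0" "poly p 1 \<noteq> poly p 0"
  obtains t where "t \<noteq> 0" "poly p t = 0"
proof -
  have "\<not> constant (poly p)"
    using assms(2) unfolding constant_def by blast
  then obtain t where "poly p t = 0"
    using fundamental_theorem_of_algebra by blast
  with assms(1) show ?thesis
    using that by (cases "t = 0") auto
qed

lemma weval_affine_wword:
  fixes t :: complex
  assumes "t \<noteq> 0"
  shows "weval (mat2 t 0 0 1) (mat2 t 1 0 1) (wword (2 * m + 1))
    = mat2 (t ^ 2) (1 + of_nat m - of_nat m * t) 0 1"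
proof -
  have inv: "matrix_inv (mat2 t 0 0 1) = mat2 (1 / t) 0 0 1"
    "matrix_inv (mat2 t 1 0 1) = mat2 (1 / t) (- (1 / t)) 0 1"
    using assms by (simp_all add: matrix_inv_mat2)
  have "weval (mat2 t 0 0 1) (mat2 t 1 0 1) (wword (2 * m + 1)) =
     mat_pow (mat2 1 1 0 1) m ** (mat2 t 1 0 1 ** mat2 t 0 0 1) ** mat_pow (mat2 1 (- (1 / t)) 0 1) m"
    using assms
    by (simp add: wword_def weval_append weval_concat_replicate eval_letter_def inv mat2_mult matrix_mul_assoc)
  also have "\<dots> = mat2 (t ^ 2) (1 + of_nat m - of_nat m * t) 0 1"
    using assms by (simp add: mat_pow_affine mat2_mult power2_eq_square field_simps)
  finally show ?thesis .
qed

lemma weval_affine_wpow: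
  fixes t :: complex and m j :: nat
  assumes "t \<noteq> 0"
  defines "P \<equiv> mat2 ((t\<^sup>2) ^ j) ((1 + of_nat m - of_nat m * t) * (\<Sum>i<j. (t\<^sup>2) ^ i)) 0 1"
  shows "weval (mat2 t 0 0 1) (mat2 t 1 0 1) (wpow (wword (2 * m + 1)) (int j)) = P"
    and "weval (mat2 t 0 0 1) (mat2 t 1 0 1) (wpow (wword (2 * m + 1)) (- int j)) = matrix_inv P"
proof -
  have inv: "invertible (mat2 t 0 0 1)" "invertible (mat2 t 1 0 1)" "invertible (mat2 (t\<^sup>2) c 0 1)" for c
    using assms by (simp_all add: invertible_det_nz det_mat2)
  show "weval (mat2 t 0 0 1) (mat2 t 1 0 1) (wpow (wword (2 * m + 1)) (int j)) = P"
    "weval (mat2 t 0 0 1) (mat2 t 1 0 1) (wpow (wword (2 * m + 1)) (- int j)) = matrix_inv P"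
    unfolding weval_wpow[OF inv(1,2)] weval_affine_wword[OF assms(1)] mat_zpow_def
    by (simp_all add: P_def mat_pow_affine matrix_inv_mat_pow[OF inv(3), symmetric]
        matrix_inv_mat2_det1 del: mat_pow.simps)
qed

lemma is_rep_affine_iff:
  fixes t :: complex and m j :: nat
  assumes "t \<noteq> 0"
  defines "\<beta> \<equiv> (1 + of_nat m - of_nat m * t) * (\<Sum>i<j. (t\<^sup>2) ^ i)"
  shows "is_rep (2 * m + 1) (int j) (mat2 t 0 0 1) (mat2 t 1 0 1) \<longleftrightarrow> (1 - t) * \<beta> = 1"
    and "is_rep (2 * m + 1) (- int j) (mat2 t 0 0 1) (mat2 t 1 0 1) \<longleftrightarrow> (t - 1) * \<beta> = (t\<^sup>2) ^ j"
proof -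
  have conj: "mat2 T b 0 1 ** mat2 t 0 0 1 = mat2 t 1 0 1 ** mat2 T b 0 1 \<longleftrightarrow> (1 - t) * b = 1" for T b
    by (auto simp: mat2_mult mat2_eq_iff algebra_simps)
  show "is_rep (2 * m + 1) (int j) (mat2 t 0 0 1) (mat2 t 1 0 1) \<longleftrightarrow> (1 - t) * \<beta> = 1"
    unfolding is_rep_iff weval_affine_wpow(1)[OF assms(1)] conj \<beta>_def ..
  let ?T = "(t\<^sup>2) ^ j"
  have T: "?T \<noteq> 0"
    using assms(1) by simp
  have "matrix_inv (mat2 ?T \<beta> 0 1) = mat2 (1 / ?T) (- \<beta> / ?T) 0 1"
    using matrix_inv_mat2[of ?T 1 \<beta> 0] assms(1) by simp
  moreover have "(1 - t) * (- \<beta> / ?T) = 1 \<longleftrightarrow> (t - 1) * \<beta> = ?T"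
    using T by (simp add: field_simps)
  ultimately show "is_rep (2 * m + 1) (- int j) (mat2 t 0 0 1) (mat2 t 1 0 1) \<longleftrightarrow> (t - 1) * \<beta> = ?T"
    unfolding is_rep_iff weval_affine_wpow(2)[OF assms(1)] \<beta>_def[symmetric] by (simp add: conj)
qed

lemma exists_affine_rep:
  assumes "m \<ge> 1" "n \<noteq> 0"
  obtains t where "t \<noteq> 0" "is_rep (2 * m + 1) n (mat2 t 0 0 1) (mat2 t 1 0 1)"
proof -
  define \<beta> where "\<beta> t j = (1 + of_nat m - of_nat m * t) * (\<Sum>i<j. (t\<^sup>2) ^ i)" for t :: complex and j
  define G :: "nat \<Rightarrow> complex poly"
    where "G j = [:1 + of_nat m, - of_nat m:] * (\<Sum>i<j. monom 1 2 ^ i)" for j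
  have poly_G: "poly (G j) t = \<beta> t j" for t j
    by (simp add: G_def \<beta>_def poly_sum poly_monom poly_power algebra_simps)
  have \<beta>0: "\<beta> 0 (Suc j) = 1 + of_nat m" for j
    by (induction j) (simp_all add: \<beta>_def)
  have m0: "(of_nat m :: complex) \<noteq> 0" and m1: "(of_nat m :: complex) \<noteq> - 1"
    using assms(1) of_nat_neq_0[of m, where 'a = complex] by (simp_all add: add_eq_0_iff)
  show ?thesis
  proof (cases "n > 0")
    case True
    define j where "j = nat n - 1"
    have n: "n = int (Suc j)"
      using True by (simp add: j_def)
    define p where "p = [:1, -1:] * G (Suc j) - 1"
    have poly_p: "poly p t = (1 - t) * \<beta> t (Suc j) - 1" for t
      by (simp add: p_def poly_G algebra_simps)
    obtain t where t: "t \<noteq> 0" "poly p t = 0"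
      using poly_nonzero_root[of p] poly_p[of 0] poly_p[of 1] m0 m1 by (auto simp: \<beta>0)
    then show ?thesis
      using that is_rep_affine_iff(1)[OF t(1), of m "Suc j"] poly_p[of t] by (simp add: n \<beta>_def)
  next
    case False
    define j where "j = nat (- n) - 1"
    have n: "n = - int (Suc j)"
      using False assms(2) by (simp add: j_def)
    define p where "p = [:-1, 1:] * G (Suc j) - monom 1 2 ^ Suc j"
    have poly_p: "poly p t = (t - 1) * \<beta> t (Suc j) - (t\<^sup>2) ^ Suc j" for t
      by (simp add: p_def poly_G poly_monom poly_power algebra_simps)
    obtain t where t: "t \<noteq> 0" "poly p t = 0"
      using poly_nonzero_root[of p] poly_p[of 0] poly_p[of 1] m0 m1 by (auto simp: \<beta>0)
    then show ?thesis
      using that is_rep_affine_iff(2)[OF t(1), of m "Suc j"] poly_p[of t] by (simp add: n \<beta>_def)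
  qed
qed

lemma a_b_inv_power_nontrivial:
  assumes "m \<ge> 1" "n \<noteq> 0"
  shows "\<not> geq (2 * m + 1) n (concat (replicate (Suc j) [la, lB])) []"
proof
  assume geq: "geq (2 * m + 1) n (concat (replicate (Suc j) [la, lB])) []"
  obtain t where t: "t \<noteq> 0" "is_rep (2 * m + 1) n (mat2 t 0 0 1) (mat2 t 1 0 1)"
    using exists_affine_rep[OF assms] .
  have inv: "invertible (mat2 t 0 0 1)" "invertible (mat2 t 1 0 1)"
    using t(1) by (simp_all add: invertible_det_nz det_mat2)
  have "mat2 t 0 0 1 ** matrix_inv (mat2 t 1 0 1) = mat2 1 (- 1) 0 1"
    using t(1) by (simp add: matrix_inv_mat2 mat2_mult)
  then have "weval (mat2 t 0 0 1) (mat2 t 1 0 1) (concat (replicate (Suc j) [la, lB]))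
      = mat2 1 (- of_nat (Suc j)) 0 1"
    unfolding weval_concat_replicate by (simp add: eval_letter_def mat_pow_affine del: mat_pow.simps)
  moreover have "weval (mat2 t 0 0 1) (mat2 t 1 0 1) (concat (replicate (Suc j) [la, lB])) = mat 1"
    using weval_eq_if_geq[OF inv t(2) geq] by simp
  ultimately show False
    by (simp add: mat_eq_mat2 mat2_eq_iff del: of_nat_Suc)
qed

lemma chebS_nonzero_if_proj_faithful:
  assumes "det A = 1" "det B = 1" "proj_faithful (2 * m + 1) n A B" "m \<ge> 1" "n \<noteq> 0"
  shows "chebS_nat j (trace (A ** matrix_inv B)) \<noteq> 0"
proof
  assume "chebS_nat j (trace (A ** matrix_inv B)) = 0"
  moreover have "det (A ** matrix_inv B) = 1"
    using assms(1,2) det_trace_matrix_inv by (simp add: det_mul)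
  ultimately have "mat_pow (A ** matrix_inv B) (Suc j) = mat 1 \<or> mat_pow (A ** matrix_inv B) (Suc j) = - mat 1"
    using mat_pow_Suc_pm_one_if_chebS_zero by blast
  moreover have "weval A B (concat (replicate (Suc j) [la, lB])) = mat_pow (A ** matrix_inv B) (Suc j)"
    unfolding weval_concat_replicate by (simp add: eval_letter_def del: mat_pow.simps)
  ultimately have "geq (2 * m + 1) n (concat (replicate (Suc j) [la, lB])) []"
    using assms(3) unfolding proj_faithful_def by metis
  with a_b_inv_power_nontrivial[OF assms(4,5)] show False ..
qed

theorem proposition3p4:
  fixes k :: nat and n :: int
  assumes "k \<ge> 1" and "n \<noteq> 0"
  shows
   "(\<forall>m M y. k = 2 * m \<longrightarrow> M \<noteq> 0 \<longrightarrow>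
       is_rep k n (mat2 M 1 0 (inverse M)) (mat2 M 0 (2 - y) (inverse M)) \<longrightarrow>
       mat2 M 1 0 (inverse M) ** mat2 M 0 (2 - y) (inverse M)
         \<noteq> mat2 M 0 (2 - y) (inverse M) ** mat2 M 1 0 (inverse M) \<longrightarrow>
       chebS (int m - 1) y *
       chebS (n - 1) (trace (weval (mat2 M 1 0 (inverse M)) (mat2 M 0 (2 - y) (inverse M)) (wword k)))
         \<noteq> 0)
    \<and>
    (\<forall>m M y. k = 2 * m + 1 \<longrightarrow> m \<ge> 1 \<longrightarrow> M \<noteq> 0 \<longrightarrow>
       is_rep k n (mat2 M 1 0 (inverse M)) (mat2 M 0 (2 - y) (inverse M)) \<longrightarrow>
       proj_faithful k n (mat2 M 1 0 (inverse M)) (mat2 M 0 (2 - y) (inverse M)) \<longrightarrow>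
       proj_discrete (mat2 M 1 0 (inverse M)) (mat2 M 0 (2 - y) (inverse M)) \<longrightarrow>
       chebS (int m) y * chebS (int m - 1) y \<noteq> 0)"
  unfolding rho_a_def[symmetric] rho_b_def[symmetric]
proof (intro conjI allI impI)
  fix m M y
  assume k: "k = 2 * m" and M: "M \<noteq> 0" and rep: "is_rep k n (rho_a M) (rho_b M y)"
    and noncomm: "rho_a M ** rho_b M y \<noteq> rho_b M y ** rho_a M"
  from noncomm have "rho_a M \<noteq> rho_b M y"
    by auto
  then show "chebS (int m - 1) y * chebS (n - 1) (trace (weval (rho_a M) (rho_b M y) (wword k))) \<noteq> 0"
    using chebS_pred_nonzero_even[OF M] chebS_trace_wword_nonzero[OF det_rho[OF M] rep _ assms(2)] rep k
    by simp
next
  fix m M y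
  assume k: "k = 2 * m + 1" and m: "m \<ge> 1" and M: "M \<noteq> 0"
    and faithful: "proj_faithful k n (rho_a M) (rho_b M y)"
  have "chebS_nat j y \<noteq> 0" for j
    using chebS_nonzero_if_proj_faithful[OF det_rho[OF M] faithful[unfolded k] m assms(2)]
    by (simp add: trace_rho_inverse[OF M])
  moreover have "int m - 1 = int (m - 1)"
    using m by simp
  ultimately show "chebS (int m) y * chebS (int m - 1) y \<noteq> 0"
    by (metis chebS_of_nat mult_eq_0_iff)
qed

end
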